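(* Let $i\ge 3$ and $k\ge 3$ be integers. Then: (a) $n_3(F_i,F_{i+2},F_{i+k})=\tfrac12\bigl(7F_iF_{i+2}-F_i-F_{i+2}+1\bigr)$ whenever $k\ge i+3$; (b) $n_3(F_i,F_{i+2},F_{2i})=\tfrac12\bigl((5F_i-1)F_{i+2}-F_i+1\bigr)-2F_iF_{i-2}$; (c) $n_3(F_i,F_{i+2},F_{2i-1})=\tfrac12\bigl((F_i+4F_{i-1}-1)F_{i+2}-F_i+1\bigr)-2F_{i-1}F_{i-3}$ for $i\ge 4$; (d) $n_3(F_i,F_{i+2},F_{2i-2})=\tfrac12\bigl((3F_i-1)F_{i+2}-F_i+1\bigr)-(8F_i-15F_{i-2})F_{i-4}$ for $i\ge 5$; (e) if $r=\lfloor (F_i-1)/F_k\rfloor\ge 3$ (equivalently $k\le i-3$), then $$n_3(F_i,F_{i+2},F_{i+k})=\tfrac12\bigl((F_i+6F_k-1)F_{i+2}-F_i+1\bigr)-\tfrac12\bigl(2rF_i-(r+4)(r-3)F_k\bigr)F_{k-2}.$$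
   Context: Fibonacci numbers: $F_0=0$, $F_1=1$, $F_n=F_{n-1}+F_{n-2}$. For positive integers $a_1,\dots,a_l$ with $\gcd(a_1,\dots,a_l)=1$ and an integer $n$, let $d(n;a_1,\dots,a_l)$ be the number of tuples $(x_1,\dots,x_l)$ of nonnegative integers with $a_1x_1+\dots+a_lx_l=n$. For a nonnegative integer $p$, the $p$-Sylvester number $n_p(a_1,\dots,a_l)$ is the number of nonnegative integers $n$ with $d(n;a_1,\dots,a_l)\le p$. *)

theory Defs
  imports Complex_Main "HOL-Number_Theory.Fib"
begin

definition num_reps :: "nat \<Rightarrow> nat list \<Rightarrow> nat" where
  "num_reps n as = card {xs :: nat list. length xs = length as \<and>
      (\<Sum>j<length as. as ! j * xs ! j) = n}"

definition sylvester_p :: "nat \<Rightarrow> nat list \<Rightarrow> nat" where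
  "sylvester_p p as = card {n :: nat. num_reps n as \<le> p}"

end

theory Submission
  imports Defs "HOL-Number_Theory.Cong"
begin

text \<open>
  Let \<open>c + q a = f b\<close> and write \<open>n = (r b mod a) + a x\<close> with \<open>r < a\<close>. Since \<open>c \<equiv> f b\<close> modulo \<open>a\<close>,
  a representation \<open>n = a x' + b y + c z\<close> forces \<open>y + f z = r + a s\<close> for some \<open>s\<close>, and then
  \<open>x' = x - \<lfloor>r b / a\<rfloor> - (s b - z q)\<close>. So \<open>d(n)\<close> counts the lattice points \<open>(s, z)\<close> with
  \<open>f z \<le> r + a s\<close> whose level \<open>s b - z q\<close> is at most \<open>x - \<lfloor>r b / a\<rfloor>\<close>, and \<open>d(n) \<le> 3\<close> exactly
  when \<open>x - \<lfloor>r b / a\<rfloor>\<close> is below the fourth lowest level \<open>W(r)\<close>. Summing over the residues,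
  \<open>n_3 = \<Sum>\<^sub>r (\<lfloor>r b / a\<rfloor> + W(r)) = (a - 1)(b - 1)/2 + \<Sum>\<^sub>r W(r)\<close>.
  If \<open>5 a q \<le> f b\<close>, the columns \<open>s = 0, 1, 2, 3\<close> occupy disjoint bands of levels \<open>((s - 1) b, s b]\<close>,
  so \<open>W(r)\<close> is determined by the column heights \<open>\<lfloor>(r + a s) / f\<rfloor>\<close>. For the Fibonacci triple
  \<open>(F i, F (i + 2), F (i + k))\<close> one has \<open>f = F k\<close> and \<open>q = F (k - 2)\<close>, and in each of the five
  regimes the heights are piecewise constant in \<open>r\<close>, which makes \<open>\<Sum>\<^sub>r W(r)\<close> explicit.
\<close>

lemma card_by_residue_classes:
  fixes P :: "nat \<Rightarrow> bool" and \<sigma> M :: "nat \<Rightarrow> nat"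
  assumes a: "a > 0" and bij: "bij_betw \<sigma> {..<a} {..<a}"
    and classes: "\<And>r x. r < a \<Longrightarrow> P (\<sigma> r + a * x) \<longleftrightarrow> x < M r"
  shows "card {n. P n} = (\<Sum>r<a. M r)"
proof -
  let ?g = "\<lambda>(r, x). \<sigma> r + a * x"
  let ?S = "SIGMA r:{..<a}. {..<M r}"
  have \<sigma>_lt: "\<sigma> r < a" if "r < a" for r
    using bij that by (auto simp: bij_betw_def)
  have "inj_on ?g ?S"
  proof (rule inj_onI, clarsimp)
    fix r x r' x'
    assume r: "r < a" "r' < a" and eq: "\<sigma> r + a * x = \<sigma> r' + a * x'"
    then have "(\<sigma> r + a * x) mod a = (\<sigma> r' + a * x') mod a" by simp
    then have "\<sigma> r = \<sigma> r'"
      using \<sigma>_lt r by simp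
    then have "r = r'"
      using bij r by (auto simp: bij_betw_def inj_on_def)
    with eq a show "r = r' \<and> x = x'" by simp
  qed
  moreover have "?g ` ?S = {n. P n}"
  proof
    show "?g ` ?S \<subseteq> {n. P n}" using classes by auto
    show "{n. P n} \<subseteq> ?g ` ?S"
    proof
      fix n assume "n \<in> {n. P n}"
      have "n mod a \<in> \<sigma> ` {..<a}"
        using bij a by (simp add: bij_betw_def)
      then obtain r where r: "r < a" "\<sigma> r = n mod a" by auto
      then have n: "n = \<sigma> r + a * (n div a)" by simp
      with \<open>n \<in> {n. P n}\<close> have "P (\<sigma> r + a * (n div a))" by simp
      with classes r have "n div a < M r" by blast
      with r n show "n \<in> ?g ` ?S" by (auto intro!: image_eqI[of _ _ "(r, n div a)"])
    qed
  qed
  ultimately have "card {n. P n} = card ?S"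
    by (metis card_image)
  then show ?thesis by simp
qed

lemma bij_betw_mult_mod:
  fixes a b :: nat
  assumes "a > 0" "coprime a b"
  shows "bij_betw (\<lambda>r. r * b mod a) {..<a} {..<a}"
proof -
  have inj: "inj_on (\<lambda>r. r * b mod a) {..<a}"
  proof (rule inj_onI)
    fix r r' assume "r \<in> {..<a}" "r' \<in> {..<a}" and "r * b mod a = r' * b mod a"
    then show "r = r'"
      using assms(2) by (metis cong_def cong_mult_rcancel_nat coprime_commute lessThan_iff mod_less)
  qed
  then have "(\<lambda>r. r * b mod a) ` {..<a} = {..<a}"
    using assms(1) by (intro endo_inj_surj) auto
  with inj show ?thesis by (simp add: bij_betw_def)
qed

lemma mult_div_add_diff_mult_div:
  fixes a b r :: nat
  assumes "coprime a b" "0 < r" "r < a"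
  shows "int (r * b div a) + int ((a - r) * b div a) = int b - 1"
proof -
  define q m where "q = r * b div a" and "m = r * b mod a"
  have "\<not> a dvd r * b"
    using assms by (metis coprime_dvd_mult_left_iff dvd_imp_le not_le)
  then have m: "0 < m" "m < a"
    using assms unfolding m_def by (auto simp: dvd_eq_mod_eq_0)
  have "int (r * b) = int a * int q + int m"
    unfolding q_def m_def by (metis div_mult_mod_eq mult.commute of_nat_add of_nat_mult)
  then have "int ((a - r) * b) = int a * int b - (int a * int q + int m)"
    using assms(3) by (simp add: left_diff_distrib)
  also have "\<dots> = (int a - int m) + int a * (int b - int q - 1)"
    by (simp add: algebra_simps)
  finally have "int ((a - r) * b) div int a = int b - int q - 1"
    using m by simp
  then show ?thesis
    unfolding q_def by (simp add: zdiv_int)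
qed

lemma double_sum_mult_div:
  fixes a b :: nat
  assumes "coprime a b" "0 < a"
  shows "2 * (\<Sum>r<a. int (r * b div a)) = (int a - 1) * (int b - 1)"
proof -
  let ?f = "\<lambda>r. int (r * b div a)"
  have "(\<Sum>r<a. ?f r) = (\<Sum>r\<in>{1..<a}. ?f r)"
    using assms(2) by (simp add: atLeast0LessThan[symmetric] sum.atLeast_Suc_lessThan)
  moreover have "(\<Sum>r\<in>{1..<a}. ?f r) = (\<Sum>r\<in>{1..<a}. ?f (a - r))"
    by (subst sum.atLeastLessThan_rev) simp
  ultimately have "2 * (\<Sum>r<a. ?f r) = (\<Sum>r\<in>{1..<a}. ?f r + ?f (a - r))"
    by (simp add: sum.distrib)
  also have "\<dots> = (\<Sum>r\<in>{1..<a}. int b - 1)"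
    using mult_div_add_diff_mult_div[OF assms(1)] by (intro sum.cong) auto
  also have "\<dots> = (int a - 1) * (int b - 1)"
    using assms by simp
  finally show ?thesis .
qed

lemma sum_lessThan_add_split:
  "(\<Sum>r<m + n. g r) = (\<Sum>r<m. g r) + (\<Sum>r<n. g (m + r))" for g :: "nat \<Rightarrow> 'a::comm_monoid_add"
  by (induction n) (simp_all add: add.assoc)

lemma hermite_identity_nat:
  assumes "f > 0"
  shows "(\<Sum>r<f. (x + r) div f) = (x :: nat)"
proof (induction x)
  case 0
  then show ?case by simp
next
  case (Suc x)
  let ?g = "\<lambda>r. (x + r) div f"
  have "?g 0 + (\<Sum>r<f. ?g (Suc r)) = (\<Sum>r<Suc f. ?g r)"
    by (rule sum.lessThan_Suc_shift[symmetric])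
  also have "\<dots> = x + (x div f + 1)"
    using Suc assms by simp
  finally show ?case by simp
qed

lemma double_sum_add_div_mult:
  fixes f m x :: nat
  assumes "f > 0"
  shows "2 * (\<Sum>r<m * f. (x + r) div f) = 2 * m * x + f * m * (m - 1)"
proof (induction m)
  case 0
  then show ?case by simp
next
  case (Suc m)
  have "(\<Sum>r<Suc m * f. (x + r) div f)
      = (\<Sum>r<m * f. (x + r) div f) + (\<Sum>r<f. (x + m * f + r) div f)"
    by (simp add: sum_lessThan_add_split add.assoc add.commute[of f])
  also have "(\<Sum>r<f. (x + m * f + r) div f) = x + m * f"
    by (rule hermite_identity_nat[OF assms])
  finally show ?case
    using Suc by (cases m) (simp_all add: algebra_simps)
qed

lemma double_sum_div_mult_add:
  fixes f m e :: nat
  assumes "f > 0" "e \<le> f"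
  shows "2 * (\<Sum>r<m * f + e. r div f) = f * m * (m - 1) + 2 * m * e"
proof -
  have "(\<Sum>r<e. (m * f + r) div f) = (\<Sum>r<e. m)"
    using assms by (intro sum.cong) (auto intro: div_nat_eqI)
  then have "(\<Sum>r<m * f + e. r div f) = (\<Sum>r<m * f. r div f) + e * m"
    by (simp add: sum_lessThan_add_split)
  moreover have "2 * (\<Sum>r<m * f. r div f) = f * m * (m - 1)"
    using double_sum_add_div_mult[OF assms(1), where m=m and x=0]
    by (simp only: add_0 mult_0_right)
  ultimately show ?thesis
    by (simp add: add_mult_distrib2 mult.commute mult.left_commute)
qed

lemma sum_atLeastLessThan_eq_const:
  fixes g :: "nat \<Rightarrow> int"
  assumes "m \<le> n" "\<And>r. m \<le> r \<Longrightarrow> r < n \<Longrightarrow> g r = v"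
  shows "(\<Sum>r\<in>{m..<n}. g r) = int (n - m) * v"
  using assms by (simp add: sum.cong[of _ _ g "\<lambda>_. v"])

locale three_generators =
  fixes a b c f q :: nat
  assumes a_pos: "0 < a" and q_pos: "0 < q" and coprime_ab: "coprime a b"
    and c_eq: "c + q * a = f * b" and separation: "5 * a * q \<le> f * b"
begin

lemma fb_pos: "0 < f * b"
proof -
  have "0 < 5 * a * q" using a_pos q_pos by simp
  with separation show ?thesis by linarith
qed

lemma f_pos: "0 < f" and b_pos: "0 < b"
  using fb_pos by simp_all

lemma c_pos: "0 < c"
proof -
  have "q * a < 5 * (q * a)" using a_pos q_pos by simp
  also have "\<dots> \<le> f * b" using separation by (simp add: ac_simps)
  finally show ?thesis using c_eq by linarith
qed

lemma c_int_eq: "int c = int f * int b - int q * int a"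
  using c_eq by (metis add_diff_cancel_right' of_nat_add of_nat_mult)

definition height :: "nat \<Rightarrow> nat \<Rightarrow> nat" where
  "height r s = (r + a * s) div f"

definition level :: "nat \<times> nat \<Rightarrow> int" where
  "level p = int (fst p) * int b - int (snd p) * int q"

definition points :: "nat \<Rightarrow> (nat \<times> nat) set" where
  "points r = {(s, z). f * z \<le> r + a * s}"

lemma level_Pair [simp]: "level (s, z) = int s * int b - int z * int q"
  by (simp add: level_def)

lemma mem_points_iff_le_height: "(s, z) \<in> points r \<longleftrightarrow> z \<le> height r s"
  using f_pos by (simp add: points_def height_def less_eq_div_iff_mult_less_eq mult.commute)

lemma height_eqI: "k * f \<le> r + a * s \<Longrightarrow> r + a * s < (k + 1) * f \<Longrightarrow> height r s = k"
  unfolding height_def by (intro div_nat_eqI) (auto simp: mult.commute)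

lemma points_mult_q_bound:
  assumes "(t, z) \<in> points r" "r < a"
  shows "f * (z * q) < a * (t + 1) * q"
proof -
  have "f * (z * q) \<le> (r + a * t) * q"
    using assms(1) by (simp add: points_def mult.assoc[symmetric])
  also have "\<dots> < a * (t + 1) * q"
    using assms(2) q_pos by (simp add: algebra_simps)
  finally show ?thesis .
qed

lemma points_mult_q_less:
  assumes "(t, z) \<in> points r" "r < a" "t \<le> 3"
  shows "z * q < b"
proof -
  have "f * (z * q) < a * (t + 1) * q"
    using points_mult_q_bound assms by blast
  also have "\<dots> \<le> 5 * a * q"
    using assms(3) by (intro mult_le_mono1) simp
  also have "\<dots> \<le> f * b"
    by (rule separation)
  finally show ?thesis by simp
qed

lemma level_beyond_column:
  assumes "(t, z) \<in> points r" "r < a" "s < t" "s \<le> 3"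
  shows "int s * int b < level (t, z)"
proof -
  have "t + 1 \<le> 5 * (t - s)"
    using assms(3,4) by linarith
  then have "a * q * (t + 1) \<le> a * q * (5 * (t - s))"
    by (rule mult_le_mono2)
  then have "a * (t + 1) * q \<le> 5 * a * q * (t - s)"
    by (simp only: ac_simps)
  also have "\<dots> \<le> f * b * (t - s)"
    using separation by (rule mult_le_mono1)
  finally have "f * (z * q) < f * (b * (t - s))"
    using points_mult_q_bound[OF assms(1,2)] by (simp only: mult.assoc)
  then have "z * q < b * (t - s)" by simp
  then have "int (z * q) < int (b * (t - s))"
    by (simp only: of_nat_less_iff)
  then have "int z * int q < int b * (int t - int s)"
    using assms(3) by simp
  then show ?thesis by (simp add: algebra_simps)
qed

lemma level_before_column:
  assumes "r < a" "s \<le> 3" "z0 \<le> height r s" "t < s"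
  shows "level (t, z) < level (s, z0)"
proof -
  have "z0 * q < b"
    using points_mult_q_less[OF _ assms(1,2), of z0] assms(3) by (simp add: mem_points_iff_le_height)
  then have "int z0 * int q < int b"
    by (simp flip: of_nat_mult)
  moreover have "t * b + b \<le> s * b"
    using mult_le_mono1[of "t + 1" s b] assms(4) by simp
  then have "int t * int b + int b \<le> int s * int b"
    by (simp flip: of_nat_mult of_nat_add)
  moreover have "0 \<le> int z * int q"
    by simp
  ultimately show ?thesis
    unfolding level_Pair by linarith
qed

lemma lowest_four_points:
  assumes r: "r < a" and s: "s \<le> 3" and z0: "z0 \<le> height r s"
    and four: "(\<Sum>t<s. height r t + 1) + (height r s - z0) = 3"
  defines "T \<equiv> (SIGMA t:{..<s}. {..height r t}) \<union> {s} \<times> {z0..height r s}"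
  shows "T \<subseteq> points r" "card T = 4" "(s, z0) \<in> T"
    and "\<forall>p\<in>T. level p \<le> level (s, z0)"
    and "\<forall>p\<in>points r. level p < level (s, z0) \<longrightarrow> p \<in> T - {(s, z0)}"
proof -
  show "T \<subseteq> points r"
    unfolding T_def by (auto simp: mem_points_iff_le_height)
  have "card T = card (SIGMA t:{..<s}. {..height r t}) + card ({s} \<times> {z0..height r s})"
    unfolding T_def by (intro card_Un_disjoint) auto
  also have "\<dots> = (\<Sum>t<s. height r t + 1) + (height r s + 1 - z0)"
    by (simp add: card_cartesian_product)
  finally show "card T = 4"
    using four z0 by linarith
  show "(s, z0) \<in> T"
    unfolding T_def using z0 by simp
  show "\<forall>p\<in>T. level p \<le> level (s, z0)"
  proof
    fix p assume "p \<in> T"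
    then consider t z where "p = (t, z)" "t < s" | z where "p = (s, z)" "z0 \<le> z"
      unfolding T_def by auto
    then show "level p \<le> level (s, z0)"
    proof cases
      case 1
      then show ?thesis
        using level_before_column[OF r s z0 \<open>t < s\<close>, of z] by simp
    next
      case 2
      then show ?thesis by (simp add: mult_right_mono)
    qed
  qed
  show "\<forall>p\<in>points r. level p < level (s, z0) \<longrightarrow> p \<in> T - {(s, z0)}"
  proof (intro ballI impI)
    fix p assume p: "p \<in> points r" and less: "level p < level (s, z0)"
    obtain t z where tz: "p = (t, z)" by fastforce
    have "t \<le> s"
    proof (rule ccontr)
      assume "\<not> t \<le> s"
      then have "int s * int b < level p"
        using level_beyond_column[OF p[unfolded tz] r _ s] tz by simp
      moreover have "level (s, z0) \<le> int s * int b" by simp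
      ultimately show False using less by linarith
    qed
    moreover have "z0 < z" if "t = s"
    proof -
      have "int z0 * int q < int z * int q"
        using less tz that by simp
      then show ?thesis by (simp add: mult_less_cancel_right)
    qed
    moreover have "z \<le> height r t"
      using p tz by (simp add: mem_points_iff_le_height)
    ultimately show "p \<in> T - {(s, z0)}"
      unfolding T_def tz by (cases "t = s") auto
  qed
qed

text \<open>Column \<open>s\<close> of \<open>points r\<close> has \<open>height r s + 1\<close> points, and for \<open>s \<le> 3\<close> their levels lie in
  \<open>((s - 1) b, s b]\<close>, above all earlier columns and below all later ones. The fourth lowest level
  is therefore taken in the first column where the number of points so far reaches four.\<close>
definition fourth_level :: "nat \<Rightarrow> int" where
  "fourth_level r =
    (if 3 \<le> height r 0 then level (0, height r 0 - 3)
     else if 2 \<le> height r 0 + height r 1 then level (1, height r 0 + height r 1 - 2)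
     else if 1 \<le> height r 0 + height r 1 + height r 2
     then level (2, height r 0 + height r 1 + height r 2 - 1)
     else level (3, height r 3))"

lemma height_mono: "s \<le> s' \<Longrightarrow> height r s \<le> height r s'"
  unfolding height_def by (intro div_le_mono) simp

lemma fourth_level_attained:
  obtains s z0 where "s \<le> 3" "z0 \<le> height r s"
    "(\<Sum>t<s. height r t + 1) + (height r s - z0) = 3" "fourth_level r = level (s, z0)"
proof -
  let ?h = "height r"
  have mono: "?h 0 \<le> ?h 1" "?h 1 \<le> ?h 2" by (simp_all add: height_mono)
  consider "3 \<le> ?h 0"
    | "\<not> 3 \<le> ?h 0" "2 \<le> ?h 0 + ?h 1"
    | "\<not> 2 \<le> ?h 0 + ?h 1" "1 \<le> ?h 0 + ?h 1 + ?h 2"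
    | "\<not> 1 \<le> ?h 0 + ?h 1 + ?h 2"
    by linarith
  then show ?thesis
  proof cases
    case 1
    then show ?thesis by (intro that[of 0 "?h 0 - 3"]) (auto simp: fourth_level_def)
  next
    case 2
    then show ?thesis
      using mono by (intro that[of 1 "?h 0 + ?h 1 - 2"]) (auto simp: fourth_level_def)
  next
    case 3
    then show ?thesis
      using mono by (intro that[of 2 "?h 0 + ?h 1 + ?h 2 - 1"])
        (auto simp: fourth_level_def numeral_2_eq_2)
  next
    case 4
    then show ?thesis
      by (intro that[of 3 "?h 3"]) (auto simp: fourth_level_def numeral_3_eq_3 numeral_2_eq_2)
  qed
qed

definition below :: "nat \<Rightarrow> int \<Rightarrow> (nat \<times> nat) set" where
  "below r X = {p \<in> points r. level p \<le> X}"

lemma card_below_le_3_iff: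
  assumes "r < a" "finite (below r X)"
  shows "card (below r X) \<le> 3 \<longleftrightarrow> X < fourth_level r"
proof -
  obtain s z0 where s: "s \<le> 3" "z0 \<le> height r s"
    "(\<Sum>t<s. height r t + 1) + (height r s - z0) = 3" and W: "fourth_level r = level (s, z0)"
    by (rule fourth_level_attained)
  define T where "T = (SIGMA t:{..<s}. {..height r t}) \<union> {s} \<times> {z0..height r s}"
  note T = lowest_four_points[OF assms(1) s, folded T_def]
  have "finite T"
    using T(2) by (intro card_ge_0_finite) simp
  show ?thesis
  proof
    assume le3: "card (below r X) \<le> 3"
    show "X < fourth_level r"
    proof (rule ccontr)
      assume "\<not> X < fourth_level r"
      then have "T \<subseteq> below r X"
        using T(1,4) W unfolding below_def by fastforce
      then have "card T \<le> card (below r X)"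
        using assms(2) by (rule card_mono[rotated])
      with le3 T(2) show False by simp
    qed
  next
    assume "X < fourth_level r"
    then have "below r X \<subseteq> T - {(s, z0)}"
      using T(5) W unfolding below_def by auto
    then have "card (below r X) \<le> card (T - {(s, z0)})"
      using \<open>finite T\<close> by (intro card_mono) auto
    also have "\<dots> = 3"
      using T(2,3) \<open>finite T\<close> by simp
    finally show "card (below r X) \<le> 3" .
  qed
qed

text \<open>The point \<open>(s, z)\<close> of level \<open>fourth_level r\<close> gives \<open>y b + z c = r b + a \<cdot> fourth_level r\<close>
  with \<open>y = r + a s - f z \<ge> 0\<close>.\<close>
lemma fourth_level_lower_bound: "0 \<le> int (r * b div a) + fourth_level r"
proof -
  obtain s z0 where "z0 \<le> height r s" and W: "fourth_level r = level (s, z0)"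
    by (rule fourth_level_attained)
  then have "f * z0 \<le> r + a * s"
    using mem_points_iff_le_height by (simp add: points_def)
  then have y: "int (r + a * s - f * z0) = int r + int a * int s - int f * int z0"
    by simp
  have "0 \<le> int ((r + a * s - f * z0) * b + z0 * c)"
    by (rule of_nat_0_le_iff)
  also have "\<dots> = (int r + int a * int s - int f * int z0) * int b + int z0 * int c"
    by (simp only: of_nat_add of_nat_mult y)
  also have "\<dots> = int (r * b) + int a * fourth_level r"
    unfolding W c_int_eq by (simp add: algebra_simps)
  also have "int (r * b) = int a * int (r * b div a) + int (r * b mod a)"
    by (metis div_mult_mod_eq mult.commute of_nat_add of_nat_mult)
  finally have "- int (r * b mod a) \<le> int a * (int (r * b div a) + fourth_level r)"
    by (simp add: algebra_simps)
  moreover have "int (r * b mod a) < int a"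
    using a_pos by simp
  ultimately have "int a * (-1) < int a * (int (r * b div a) + fourth_level r)"
    by linarith
  then have "-1 < int (r * b div a) + fourth_level r"
    using a_pos by (simp only: mult_less_cancel_left_pos of_nat_0_less_iff)
  then show ?thesis by simp
qed

definition reps :: "nat \<Rightarrow> nat list set" where
  "reps n = {xs. length xs = 3 \<and> a * xs!0 + b * xs!1 + c * xs!2 = n}"

lemma num_reps_eq_card_reps: "num_reps n [a, b, c] = card (reps n)"
  unfolding num_reps_def reps_def
  by (simp add: numeral_3_eq_3 numeral_2_eq_2 lessThan_Suc algebra_simps)

lemma mem_reps_iff:
  "xs \<in> reps n \<longleftrightarrow> (\<exists>u v t. xs = [u, v, t] \<and> a * u + b * v + c * t = n)"
  unfolding reps_def by (auto simp: numeral_3_eq_3 length_Suc_conv)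

lemma finite_reps: "finite (reps n)"
proof (rule finite_subset)
  show "reps n \<subseteq> {xs. set xs \<subseteq> {..n} \<and> length xs = 3}"
  proof
    fix xs assume "xs \<in> reps n"
    then obtain u v t where xs: "xs = [u, v, t]" and "a * u + b * v + c * t = n"
      using mem_reps_iff by blast
    moreover have "u \<le> a * u" "v \<le> b * v" "t \<le> c * t"
      using a_pos b_pos c_pos by simp_all
    ultimately have "u \<le> n" "v \<le> n" "t \<le> n"
      by linarith+
    with xs show "xs \<in> {xs. set xs \<subseteq> {..n} \<and> length xs = 3}"
      by auto
  qed
  show "finite {xs. set xs \<subseteq> {..n} \<and> length xs = 3}"
    by (rule finite_lists_length_eq) simp
qed

text \<open>Reducing \<open>a x' + b y + c z = r b mod a + a x\<close> modulo \<open>a\<close> with \<open>c \<equiv> f b\<close> gives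
  \<open>y + f z \<equiv> r\<close>; the column is \<open>s = (y + f z) div a\<close>.\<close>
lemma rep_column_decomposition:
  assumes r: "r < a" and rep: "a * x' + b * y + c * z = r * b mod a + a * x"
  shows "y + f * z = r + a * ((y + f * z) div a)"
    and "int x' = int x - int (r * b div a) - level ((y + f * z) div a, z)"
proof -
  define t K where "t = y + f * z" and "K = r * b div a"
  have rb: "int r * int b = int a * int K + int (r * b mod a)"
    unfolding K_def by (metis div_mult_mod_eq mult.commute of_nat_add of_nat_mult)
  have "int a * int x' + int b * int y + int c * int z = int (r * b mod a) + int a * int x"
    using rep by (metis of_nat_add of_nat_mult)
  then have rep_t:
    "int a * int x' + int b * int t - int q * int a * int z = int (r * b mod a) + int a * int x"
    unfolding t_def c_int_eq by (simp add: algebra_simps)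
  then have "int b * (int t - int r) = int a * (int x - int x' + int q * int z - int K)"
    using rb by (simp add: algebra_simps)
  then have "int a dvd int b * (int t - int r)" by simp
  then have "int a dvd int t - int r"
    using coprime_ab by (simp add: coprime_dvd_mult_right_iff)
  then have "int t mod int a = int r mod int a"
    by (simp add: mod_eq_dvd_iff)
  then have "t mod a = r"
    using r by (metis mod_less of_nat_eq_iff zmod_int)
  then have t: "t = r + a * (t div a)"
    by (metis div_mult_mod_eq add.commute mult.commute)
  then show "y + f * z = r + a * ((y + f * z) div a)"
    unfolding t_def .
  have "int a * int x' + int b * (int r + int a * int (t div a)) - int q * int a * int z
      = int (r * b mod a) + int a * int x"
    using rep_t t by (metis of_nat_add of_nat_mult)
  then have "int a * (int x' + int b * int (t div a) - int q * int z) = int a * (int x - int K)"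
    using rb by (simp add: algebra_simps)
  then have "int x' + int b * int (t div a) - int q * int z = int x - int K"
    using a_pos mult_left_cancel[of "int a"] by simp
  then show "int x' = int x - int (r * b div a) - level ((y + f * z) div a, z)"
    unfolding t_def K_def by (simp add: algebra_simps)
qed

lemma bij_betw_reps_below:
  assumes r: "r < a"
  shows "bij_betw (\<lambda>xs. ((xs!1 + f * xs!2) div a, xs!2))
    (reps (r * b mod a + a * x)) (below r (int x - int (r * b div a)))"
proof (rule bij_betw_byWitness)
  let ?X = "int x - int (r * b div a)"
  let ?col = "\<lambda>xs. ((xs!1 + f * xs!2) div a, xs!2)"
  let ?rep = "\<lambda>(s, z). [nat (?X - level (s, z)), r + a * s - f * z, z]"
  show "\<forall>xs\<in>reps (r * b mod a + a * x). ?rep (?col xs) = xs"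
  proof
    fix xs assume "xs \<in> reps (r * b mod a + a * x)"
    then obtain x' y z where xs: "xs = [x', y, z]"
      and "a * x' + b * y + c * z = r * b mod a + a * x"
      using mem_reps_iff by blast
    from rep_column_decomposition[OF r this(2)] show "?rep (?col xs) = xs"
      unfolding xs by (simp del: level_Pair)
  qed
  show "\<forall>p\<in>below r ?X. ?col (?rep p) = p"
    using r by (auto simp: below_def points_def)
  show "?col ` reps (r * b mod a + a * x) \<subseteq> below r ?X"
  proof clarify
    fix xs assume "xs \<in> reps (r * b mod a + a * x)"
    then obtain x' y z where xs: "xs = [x', y, z]"
      and "a * x' + b * y + c * z = r * b mod a + a * x"
      using mem_reps_iff by blast
    from rep_column_decomposition[OF r this(2)] show "?col xs \<in> below r ?X"
      unfolding xs below_def points_def by (simp del: level_Pair)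
  qed
  show "?rep ` below r ?X \<subseteq> reps (r * b mod a + a * x)"
  proof clarify
    fix s z assume "(s, z) \<in> below r ?X"
    then have z: "f * z \<le> r + a * s" and le: "level (s, z) \<le> ?X"
      by (auto simp: below_def points_def)
    have rb: "int (r * b) = int a * int (r * b div a) + int (r * b mod a)"
      by (metis div_mult_mod_eq mult.commute of_nat_add of_nat_mult)
    have "int (a * nat (?X - level (s, z)) + b * (r + a * s - f * z) + c * z)
        = int a * (?X - level (s, z)) + int b * (int r + int a * int s - int f * int z) + int c * int z"
      using z le by simp
    also have "\<dots> = int (r * b mod a + a * x)"
      using rb unfolding c_int_eq by (simp add: algebra_simps)
    finally have
      "a * nat (?X - level (s, z)) + b * (r + a * s - f * z) + c * z = r * b mod a + a * x"
      by (simp only: of_nat_eq_iff)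
    then show
      "[nat (?X - level (s, z)), r + a * s - f * z, z] \<in> reps (r * b mod a + a * x)"
      unfolding reps_def by simp
  qed
qed

lemma num_reps_le_3_iff:
  assumes "r < a"
  shows "num_reps (r * b mod a + a * x) [a, b, c] \<le> 3
    \<longleftrightarrow> int x < int (r * b div a) + fourth_level r"
proof -
  note bij = bij_betw_reps_below[OF assms, of x]
  have "finite (below r (int x - int (r * b div a)))"
    using bij finite_reps bij_betw_finite by blast
  then have "card (reps (r * b mod a + a * x)) \<le> 3
      \<longleftrightarrow> int x - int (r * b div a) < fourth_level r"
    using card_below_le_3_iff[OF assms] bij_betw_same_card[OF bij] by simp
  then show ?thesis
    by (simp add: num_reps_eq_card_reps) linarith
qed

theorem sylvester_3_eq_sum_fourth_level:
  "int (sylvester_p 3 [a, b, c]) = (\<Sum>r<a. int (r * b div a) + fourth_level r)"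
proof -
  have "sylvester_p 3 [a, b, c] = (\<Sum>r<a. nat (int (r * b div a) + fourth_level r))"
    unfolding sylvester_p_def
  proof (rule card_by_residue_classes[OF a_pos bij_betw_mult_mod[OF a_pos coprime_ab]])
    fix r x assume "r < a"
    then show "num_reps (r * b mod a + a * x) [a, b, c] \<le> 3
      \<longleftrightarrow> x < nat (int (r * b div a) + fourth_level r)"
      using num_reps_le_3_iff[of r x] by linarith
  qed
  then show ?thesis
    using fourth_level_lower_bound by simp
qed

corollary real_sylvester_3_eq:
  "real (sylvester_p 3 [a, b, c])
    = (real a - 1) * (real b - 1) / 2 + real_of_int (\<Sum>r<a. fourth_level r)"
proof -
  have "2 * int (sylvester_p 3 [a, b, c])
      = (int a - 1) * (int b - 1) + 2 * (\<Sum>r<a. fourth_level r)"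
    using double_sum_mult_div[OF coprime_ab a_pos]
    by (simp add: sylvester_3_eq_sum_fourth_level sum.distrib algebra_simps)
  then have "real_of_int (2 * int (sylvester_p 3 [a, b, c]))
      = real_of_int ((int a - 1) * (int b - 1) + 2 * (\<Sum>r<a. fourth_level r))"
    by (rule arg_cong)
  then show ?thesis by simp
qed

lemma sum_fourth_level_large_f:
  assumes "4 * a \<le> f"
  shows "(\<Sum>r<a. fourth_level r) = 3 * int a * int b"
proof -
  have "fourth_level r = 3 * int b" if "r < a" for r
  proof -
    have "height r s = 0" if "s \<le> 3" for s
    proof (rule height_eqI)
      have "a * s \<le> a * 3" using \<open>s \<le> 3\<close> by simp
      then have "r + a * s < f" using \<open>r < a\<close> assms by linarith
      then show "r + a * s < (0 + 1) * f" by simp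
    qed simp
    then show ?thesis by (simp add: fourth_level_def)
  qed
  then show ?thesis by simp
qed

lemma sum_fourth_level_f_eq_a:
  assumes "f = a"
  shows "(\<Sum>r<a. fourth_level r) = int a * (2 * int b - 2 * int q)"
proof -
  have "fourth_level r = 2 * int b - 2 * int q" if "r < a" for r
  proof -
    have "height r s = s" for s
      using that assms by (intro height_eqI) (auto simp: algebra_simps)
    then show ?thesis by (simp add: fourth_level_def)
  qed
  then show ?thesis by simp
qed

lemma sum_fourth_level_a_add_q_eq_2f:
  assumes "a + q = 2 * f" "2 * q \<le> f"
  shows "(\<Sum>r<a. fourth_level r) = 2 * int f * (int b - int q)"
proof -
  define g where "g = f - q"
  have F: "f = g + q" and Q: "q \<le> g" and A: "a = f + g"
    using assms unfolding g_def by arith+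
  have v1: "fourth_level r = 2 * int b - 3 * int q" if "r < q" for r
  proof -
    have "height r 0 = 0" "height r 1 = 1" "height r 2 = 3"
      by (rule height_eqI; use that A F Q in simp)+
    then show ?thesis by (simp add: fourth_level_def)
  qed
  have v2: "fourth_level r = int b" if "q \<le> r" "r < f" for r
  proof -
    have "height r 0 = 0" "height r 1 = 2"
      by (rule height_eqI; use that A F Q in simp)+
    then show ?thesis by (simp add: fourth_level_def)
  qed
  have v3: "fourth_level r = int b - int q" if "f \<le> r" "r < f + q" for r
  proof -
    have "height r 0 = 1" "height r 1 = 2"
      by (rule height_eqI; use that A F Q in simp)+
    then show ?thesis by (simp add: fourth_level_def)
  qed
  have v4: "fourth_level r = int b - 2 * int q" if "f + q \<le> r" "r < a" for r
  proof -
    have "height r 0 = 1" "height r 1 = 3"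
      by (rule height_eqI; use that A F Q in simp)+
    then show ?thesis by (simp add: fourth_level_def)
  qed
  have "(\<Sum>r<a. fourth_level r) = (\<Sum>r\<in>{0..<q}. fourth_level r) + (\<Sum>r\<in>{q..<f}. fourth_level r)
      + (\<Sum>r\<in>{f..<f + q}. fourth_level r) + (\<Sum>r\<in>{f + q..<a}. fourth_level r)"
    using A F Q by (simp add: atLeast0LessThan[symmetric] sum.atLeastLessThan_concat)
  also have "\<dots> = int q * (2 * int b - 3 * int q) + int (f - q) * int b + int q * (int b - int q)
      + int (a - (f + q)) * (int b - 2 * int q)"
    using A F Q v1 v2 v3 v4 by (simp add: sum_atLeastLessThan_eq_const)
  also have "\<dots> = 2 * int f * (int b - int q)"
    using A F Q by (simp add: algebra_simps)
  finally show ?thesis .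
qed

lemma sum_fourth_level_a_add_q_eq_3f:
  assumes "a + q = 3 * f" "2 * q \<le> f"
  shows "(\<Sum>r<a. fourth_level r) = int a * int b - int q * (9 * int f - 8 * int q)"
proof -
  define h where "h = f - q"
  have F: "f = h + q" and Q: "q \<le> h" and A: "a = 2 * f + h"
    using assms unfolding h_def by arith+
  have v1: "fourth_level r = int b" if "r < q" for r
  proof -
    have "height r 0 = 0" "height r 1 = 2"
      by (rule height_eqI; use that A F Q in simp)+
    then show ?thesis by (simp add: fourth_level_def)
  qed
  have v2: "fourth_level r = int b - int q" if "q \<le> r" "r < f" for r
  proof -
    have "height r 0 = 0" "height r 1 = 3"
      by (rule height_eqI; use that A F Q in simp)+
    then show ?thesis by (simp add: fourth_level_def)
  qed
  have v3: "fourth_level r = int b - 2 * int q" if "f \<le> r" "r < f + q" for r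
  proof -
    have "height r 0 = 1" "height r 1 = 3"
      by (rule height_eqI; use that A F Q in simp)+
    then show ?thesis by (simp add: fourth_level_def)
  qed
  have v4: "fourth_level r = int b - 3 * int q" if "f + q \<le> r" "r < 2 * f" for r
  proof -
    have "height r 0 = 1" "height r 1 = 4"
      by (rule height_eqI; use that A F Q in simp)+
    then show ?thesis by (simp add: fourth_level_def)
  qed
  have v5: "fourth_level r = int b - 4 * int q" if "2 * f \<le> r" "r < 2 * f + q" for r
  proof -
    have "height r 0 = 2" "height r 1 = 4"
      by (rule height_eqI; use that A F Q in simp)+
    then show ?thesis by (simp add: fourth_level_def)
  qed
  have v6: "fourth_level r = int b - 5 * int q" if "2 * f + q \<le> r" "r < a" for r
  proof -
    have "height r 0 = 2" "height r 1 = 5"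
      by (rule height_eqI; use that A F Q in simp)+
    then show ?thesis by (simp add: fourth_level_def)
  qed
  have "(\<Sum>r<a. fourth_level r) = (\<Sum>r\<in>{0..<q}. fourth_level r) + (\<Sum>r\<in>{q..<f}. fourth_level r)
      + (\<Sum>r\<in>{f..<f + q}. fourth_level r) + (\<Sum>r\<in>{f + q..<2 * f}. fourth_level r)
      + (\<Sum>r\<in>{2 * f..<2 * f + q}. fourth_level r) + (\<Sum>r\<in>{2 * f + q..<a}. fourth_level r)"
    using A F Q by (simp add: atLeast0LessThan[symmetric] sum.atLeastLessThan_concat)
  also have "\<dots> = int q * int b + int (f - q) * (int b - int q) + int q * (int b - 2 * int q)
      + int (2 * f - (f + q)) * (int b - 3 * int q) + int q * (int b - 4 * int q)
      + int (a - (2 * f + q)) * (int b - 5 * int q)"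
    using A F Q v1 v2 v3 v4 v5 v6 by (simp add: sum_atLeastLessThan_eq_const)
  also have "\<dots> = int a * int b - int q * (9 * int f - 8 * int q)"
    using A F Q by (simp add: algebra_simps)
  finally show ?thesis .
qed

lemma fourth_level_less_3f:
  assumes "3 * f \<le> a" "r < 3 * f"
  shows "fourth_level r = int b - (int (r div f) + int ((a + r) div f) - 2) * int q"
proof -
  have "r div f < 3"
    using assms(2) f_pos by (simp add: div_less_iff_less_mult)
  moreover have "(3 * f) div f \<le> (a + r) div f"
    using assms(1) by (intro div_le_mono) simp
  ultimately show ?thesis
    using f_pos unfolding fourth_level_def height_def by (simp add: add.commute)
qed

lemma fourth_level_3f_add: "fourth_level (3 * f + r) = - int (r div f) * int q"
proof -
  have "height (3 * f + r) 0 = r div f + 3"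
    unfolding height_def using f_pos by simp
  then show ?thesis unfolding fourth_level_def by simp
qed

lemma double_sum_fourth_level_3f_less_a:
  assumes "3 * f < a"
  defines "\<rho> \<equiv> (a - 1) div f"
  shows "2 * (\<Sum>r<a. fourth_level r) = 6 * int f * int b
    - int q * (int f * int \<rho> * (int \<rho> - 1) + 2 * int \<rho> * (int a - int \<rho> * int f) + 12 * int f)"
proof -
  define e where "e = a - \<rho> * f"
  have "a - 1 = \<rho> * f + (a - 1) mod f"
    unfolding \<rho>_def by simp
  moreover have "(a - 1) mod f < f"
    using f_pos by simp
  ultimately have ae: "a = \<rho> * f + e" and ef: "e \<le> f"
    using assms(1) unfolding e_def by auto
  have "3 \<le> \<rho>"
  proof -
    have "(3 * f) div f \<le> (a - 1) div f"
      using assms(1) by (intro div_le_mono) simp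
    then show ?thesis using f_pos unfolding \<rho>_def by simp
  qed
  then obtain t where t: "\<rho> = t + 3"
    by (metis add.commute le_Suc_ex)
  have a3: "a = 3 * f + (t * f + e)"
    using ae t by (simp add: algebra_simps)
  have "(\<Sum>r<a. fourth_level r)
      = (\<Sum>r<3 * f. fourth_level r) + (\<Sum>r<t * f + e. fourth_level (3 * f + r))"
    unfolding a3 by (rule sum_lessThan_add_split)
  also have "(\<Sum>r<3 * f. fourth_level r)
      = (\<Sum>r<3 * f. int b - (int (r div f) + int ((a + r) div f) - 2) * int q)"
    using fourth_level_less_3f assms(1) by (intro sum.cong) auto
  also have "\<dots> = int (3 * f) * int b + 2 * int (3 * f) * int q
      - int q * (int (\<Sum>r<3 * f. (0 + r) div f) + int (\<Sum>r<3 * f. (a + r) div f))"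
    by (simp add: sum_subtractf sum.distrib sum_distrib_left algebra_simps)
  also have "(\<Sum>r<t * f + e. fourth_level (3 * f + r))
      = (\<Sum>r<t * f + e. - int q * int (r div f))"
    by (intro sum.cong) (simp_all add: fourth_level_3f_add)
  also have "\<dots> = - int q * int (\<Sum>r<t * f + e. r div f)"
    by (simp add: sum_distrib_left)
  finally have split: "2 * (\<Sum>r<a. fourth_level r) = 6 * int f * int b + 12 * int f * int q
      - int q * (2 * int (\<Sum>r<3 * f. (0 + r) div f) + 2 * int (\<Sum>r<3 * f. (a + r) div f))
      - int q * (2 * int (\<Sum>r<t * f + e. r div f))"
    by (simp add: algebra_simps)
  have "2 * (\<Sum>r<3 * f. (0 + r) div f) = 6 * f"
    using double_sum_add_div_mult[OF f_pos, where m=3 and x=0] by simp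
  then have sum_low: "2 * int (\<Sum>r<3 * f. (0 + r) div f) = 6 * int f"
    by linarith
  have "2 * (\<Sum>r<3 * f. (a + r) div f) = 6 * a + 6 * f"
    using double_sum_add_div_mult[OF f_pos, where m=3 and x=a] by simp
  then have sum_shifted: "2 * int (\<Sum>r<3 * f. (a + r) div f) = 6 * int a + 6 * int f"
    by linarith
  have "int (2 * (\<Sum>r<t * f + e. r div f)) = int (f * t * (t - 1) + 2 * t * e)"
    using double_sum_div_mult_add[OF f_pos ef, of t] by (simp only:)
  moreover have "int (f * t * (t - 1)) = int f * int t * (int t - 1)"
    by (cases t) (auto simp: algebra_simps)
  ultimately have sum_high:
    "2 * int (\<Sum>r<t * f + e. r div f) = int f * int t * (int t - 1) + 2 * int t * int e"
    by simp
  have "int a = (int t + 3) * int f + int e"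
    using ae t by simp
  then show ?thesis
    unfolding split sum_low sum_shifted sum_high t by (simp add: algebra_simps)
qed

lemma sylvester_3_large_f:
  assumes "4 * a \<le> f"
  shows "real (sylvester_p 3 [a, b, c]) = (7 * real a * real b - real a - real b + 1) / 2"
  by (simp add: real_sylvester_3_eq sum_fourth_level_large_f[OF assms] field_simps)

lemma sylvester_3_f_eq_a:
  assumes "f = a"
  shows "real (sylvester_p 3 [a, b, c])
    = ((5 * real a - 1) * real b - real a + 1) / 2 - 2 * real a * real q"
  by (simp add: real_sylvester_3_eq sum_fourth_level_f_eq_a[OF assms] field_simps)

lemma sylvester_3_a_add_q_eq_2f:
  assumes "a + q = 2 * f" "2 * q \<le> f"
  shows "real (sylvester_p 3 [a, b, c])
    = ((real a + 4 * real f - 1) * real b - real a + 1) / 2 - 2 * real f * real q"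
  by (simp add: real_sylvester_3_eq sum_fourth_level_a_add_q_eq_2f[OF assms] field_simps)

lemma sylvester_3_a_add_q_eq_3f:
  assumes "a + q = 3 * f" "2 * q \<le> f"
  shows "real (sylvester_p 3 [a, b, c])
    = ((3 * real a - 1) * real b - real a + 1) / 2 - (8 * real a - 15 * real f) * real q"
proof -
  have "3 * real f = real a + real q"
    using assms(1) by (simp flip: of_nat_add)
  then show ?thesis
    by (simp add: real_sylvester_3_eq sum_fourth_level_a_add_q_eq_3f[OF assms] field_simps) algebra
qed

lemma sylvester_3_3f_less_a:
  assumes "3 * f < a"
  defines "\<rho> \<equiv> real ((a - 1) div f)"
  shows "real (sylvester_p 3 [a, b, c]) = ((real a + 6 * real f - 1) * real b - real a + 1) / 2
    - (2 * \<rho> * real a - (\<rho> + 4) * (\<rho> - 3) * real f) * real q / 2"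
proof -
  have "2 * real_of_int (\<Sum>r<a. fourth_level r) = real_of_int (2 * (\<Sum>r<a. fourth_level r))"
    by simp
  also have "\<dots> = 6 * real f * real b
    - real q * (real f * \<rho> * (\<rho> - 1) + 2 * \<rho> * (real a - \<rho> * real f) + 12 * real f)"
    unfolding double_sum_fourth_level_3f_less_a[OF assms(1)] \<rho>_def by simp
  finally show ?thesis
    by (simp add: real_sylvester_3_eq field_simps)
qed

end

lemma fib_add_index_identity:
  assumes "2 \<le> k"
  shows "fib (i + k) + fib (k - 2) * fib i = fib k * fib (i + 2)"
proof -
  obtain m where k: "k = m + 2" using assms by (metis add.commute le_Suc_ex)
  have "fib (i + k) = fib (Suc m) * fib (Suc (Suc i)) + fib m * fib (Suc i)"
    using fib_add[of "Suc i" m] unfolding k by (simp add: add.commute)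
  then show ?thesis
    unfolding k by (simp add: fib_plus_2 algebra_simps)
qed

lemma coprime_fib_fib_add_2: "coprime (fib i) (fib (i + 2))"
  using coprime_fib_Suc_nat[of i]
  by (simp add: fib_plus_2 coprime_iff_gcd_eq_1 add.commute[of "fib (Suc i)"])

lemma double_fib_le_fib_Suc_Suc: "2 * fib n \<le> fib (Suc (Suc n))"
  by (simp add: fib_mono)

lemma five_fib_le_double_fib_add_2:
  assumes "2 \<le> n"
  shows "5 * fib n \<le> 2 * fib (n + 2)"
proof -
  obtain m where "n = Suc (Suc m)" using assms by (metis add_2_eq_Suc le_Suc_ex)
  then show ?thesis by (simp add: fib_mono)
qed

lemma three_generators_fib:
  assumes "3 \<le> i" "3 \<le> k"
  shows "three_generators (fib i) (fib (i + 2)) (fib (i + k)) (fib k) (fib (k - 2))"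
proof
  show "0 < fib i" "0 < fib (k - 2)"
    using assms by (auto intro!: fib_neq_0_nat)
  show "coprime (fib i) (fib (i + 2))"
    by (rule coprime_fib_fib_add_2)
  show "fib (i + k) + fib (k - 2) * fib i = fib k * fib (i + 2)"
    using fib_add_index_identity assms(2) by simp
  have "2 * fib (k - 2) \<le> fib k"
    using double_fib_le_fib_Suc_Suc[of "k - 2"] assms(2) by (simp add: Suc_diff_Suc numeral_2_eq_2)
  then have "5 * fib i * fib (k - 2) \<le> 2 * fib (i + 2) * fib (k - 2)"
    using five_fib_le_double_fib_add_2[of i] assms(1) by simp
  also have "\<dots> = fib (i + 2) * (2 * fib (k - 2))"
    by (simp only: mult.assoc mult.left_commute)
  also have "\<dots> \<le> fib (i + 2) * fib k"
    using \<open>2 * fib (k - 2) \<le> fib k\<close> by (rule mult_le_mono2)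
  finally show "5 * fib i * fib (k - 2) \<le> fib k * fib (i + 2)"
    by (simp add: mult.commute)
qed

lemma sylvester_3_fib_large_k:
  assumes "3 \<le> i" "i + 3 \<le> k"
  shows "real (sylvester_p 3 [fib i, fib (i + 2), fib (i + k)])
    = (7 * real (fib i) * real (fib (i + 2)) - real (fib i) - real (fib (i + 2)) + 1) / 2"
proof -
  obtain m where "i = 3 + m"
    using le_Suc_ex[OF assms(1)] by blast
  then have i: "i = Suc (Suc (Suc m))" by simp
  have "4 * fib i \<le> fib (Suc (Suc (Suc i)))"
    unfolding i by (simp add: fib_mono)
  also have "\<dots> \<le> fib k"
    using assms(2) by (intro fib_mono) simp
  finally have "4 * fib i \<le> fib k" .
  moreover have "three_generators (fib i) (fib (i + 2)) (fib (i + k)) (fib k) (fib (k - 2))"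
    using assms by (intro three_generators_fib) simp_all
  ultimately show ?thesis
    using three_generators.sylvester_3_large_f by blast
qed

lemma sylvester_3_fib_double_index:
  assumes "3 \<le> i"
  shows "real (sylvester_p 3 [fib i, fib (i + 2), fib (2 * i)])
    = ((5 * real (fib i) - 1) * real (fib (i + 2)) - real (fib i) + 1) / 2
      - 2 * real (fib i) * real (fib (i - 2))"
  using three_generators.sylvester_3_f_eq_a[OF three_generators_fib[OF assms assms]]
  by (simp only: mult_2)

lemma sylvester_3_fib_double_index_minus_1:
  assumes "4 \<le> i"
  shows "real (sylvester_p 3 [fib i, fib (i + 2), fib (2 * i - 1)])
    = ((real (fib i) + 4 * real (fib (i - 1)) - 1) * real (fib (i + 2)) - real (fib i) + 1) / 2
      - 2 * real (fib (i - 1)) * real (fib (i - 3))"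
proof -
  obtain m where "i = 4 + m"
    using le_Suc_ex[OF assms] by blast
  then have i: "i = Suc (Suc (Suc (Suc m)))" by simp
  have "i + (i - 1) = 2 * i - 1" "i - 1 - 2 = i - 3"
    using assms by simp_all
  then have "three_generators (fib i) (fib (i + 2)) (fib (2 * i - 1)) (fib (i - 1)) (fib (i - 3))"
    using three_generators_fib[of i "i - 1"] assms by (simp only:)
  moreover have "fib i + fib (i - 3) = 2 * fib (i - 1)" "2 * fib (i - 3) \<le> fib (i - 1)"
    unfolding i by (simp_all add: fib_mono)
  ultimately show ?thesis
    by (rule three_generators.sylvester_3_a_add_q_eq_2f)
qed

lemma sylvester_3_fib_double_index_minus_2:
  assumes "5 \<le> i"
  shows "real (sylvester_p 3 [fib i, fib (i + 2), fib (2 * i - 2)])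
    = ((3 * real (fib i) - 1) * real (fib (i + 2)) - real (fib i) + 1) / 2
      - (8 * real (fib i) - 15 * real (fib (i - 2))) * real (fib (i - 4))"
proof -
  obtain m where "i = 5 + m"
    using le_Suc_ex[OF assms] by blast
  then have i: "i = Suc (Suc (Suc (Suc (Suc m))))" by simp
  have "i + (i - 2) = 2 * i - 2" "i - 2 - 2 = i - 4"
    using assms by simp_all
  then have "three_generators (fib i) (fib (i + 2)) (fib (2 * i - 2)) (fib (i - 2)) (fib (i - 4))"
    using three_generators_fib[of i "i - 2"] assms by (simp only:)
  moreover have "fib i + fib (i - 4) = 3 * fib (i - 2)" "2 * fib (i - 4) \<le> fib (i - 2)"
    unfolding i by (simp_all add: fib_mono)
  ultimately show ?thesis
    by (rule three_generators.sylvester_3_a_add_q_eq_3f)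
qed

lemma sylvester_3_fib_small_k:
  assumes "3 \<le> i" "3 \<le> k" "3 \<le> (fib i - 1) div fib k"
  defines "\<rho> \<equiv> real ((fib i - 1) div fib k)"
  shows "real (sylvester_p 3 [fib i, fib (i + 2), fib (i + k)])
    = ((real (fib i) + 6 * real (fib k) - 1) * real (fib (i + 2)) - real (fib i) + 1) / 2
      - (2 * \<rho> * real (fib i) - (\<rho> + 4) * (\<rho> - 3) * real (fib k)) * real (fib (k - 2)) / 2"
proof -
  have "3 * fib k \<le> (fib i - 1) div fib k * fib k"
    using assms(3) by simp
  also have "\<dots> \<le> fib i - 1"
    by (simp add: mult.commute)
  finally have "3 * fib k < fib i"
    using fib_neq_0_nat[of k] assms(2) by linarith
  then show ?thesis
    unfolding \<rho>_def
    by (rule three_generators.sylvester_3_3f_less_a[OF three_generators_fib[OF assms(1,2)]])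
qed

theorem theorem12:
  fixes i k :: nat
  assumes "i \<ge> 3" and "k \<ge> 3"
  defines "F \<equiv> (\<lambda>m. real (fib m))"
  shows
   "(k \<ge> i + 3 \<longrightarrow>
      real (sylvester_p 3 [fib i, fib (i+2), fib (i+k)])
        = (7 * F i * F (i+2) - F i - F (i+2) + 1) / 2)
  \<and> real (sylvester_p 3 [fib i, fib (i+2), fib (2*i)])
        = ((5 * F i - 1) * F (i+2) - F i + 1) / 2 - 2 * F i * F (i-2)
  \<and> (i \<ge> 4 \<longrightarrow>
      real (sylvester_p 3 [fib i, fib (i+2), fib (2*i-1)])
        = ((F i + 4 * F (i-1) - 1) * F (i+2) - F i + 1) / 2 - 2 * F (i-1) * F (i-3))
  \<and> (i \<ge> 5 \<longrightarrow>
      real (sylvester_p 3 [fib i, fib (i+2), fib (2*i-2)])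
        = ((3 * F i - 1) * F (i+2) - F i + 1) / 2 - (8 * F i - 15 * F (i-2)) * F (i-4))
  \<and> (let r = (fib i - 1) div fib k in r \<ge> 3 \<longrightarrow>
      real (sylvester_p 3 [fib i, fib (i+2), fib (i+k)])
        = ((F i + 6 * F k - 1) * F (i+2) - F i + 1) / 2
          - (2 * real r * F i - (real r + 4) * (real r - 3) * F k) * F (k-2) / 2)"
  unfolding F_def Let_def
  using sylvester_3_fib_large_k[OF assms(1)] sylvester_3_fib_double_index[OF assms(1)]
    sylvester_3_fib_double_index_minus_1 sylvester_3_fib_double_index_minus_2
    sylvester_3_fib_small_k[OF assms(1,2)]
  by blast

end
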